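(* Consider the auxiliary dynamics defined by the sets $\mathcal A^\alpha$, $\mathcal A^\alpha_i$ below, on the torus $\mathbb Z^d/L\mathbb Z^d$ for $L$ large. Then for every configuration $\eta$ and every $\alpha\in\{1,\dots,d\}$ the total current in direction $\alpha$ vanishes: $$\sum_{x}c^{\mathrm{aux}}_{x,x+e_\alpha}(\eta)\big(\eta(x)-\eta(x+e_\alpha)\big)=0.$$
   Context: For each $\alpha\in\{1,\dots,d\}$ let $\mathcal A^\alpha=\{x^\alpha_1,\dots,x^\alpha_{n_\alpha}\}\subset\mathbb Z^d$ be a finite set of distinct sites ordered so that $x^\alpha_i\cdot e_\alpha\ge x^\alpha_j\cdot e_\alpha$ whenever $i\le j$ ($e_1,\dots,e_d$ the standard basis), and set $\mathcal A^\alpha_i=\{x^\alpha_j+e_\alpha:1\le j\le i\}\cup\{x^\alpha_j:i+1\le j\le n_\alpha\}$, $0\le i\le n_\alpha$. Configurations are $\eta\in\{0,1\}^{\mathbb Z^d/L\mathbb Z^d}$ ($0$ = empty); sites are taken modulo $L$, with $L$ large enough that all the sets involved are embedded injectively. The auxiliary dynamics exchanges $x+x^\alpha_{i+1}$ and $x+x^\alpha_{i+1}+e_\alpha$ at rate $1$ whenever $x+\mathcal A^\alpha_i$ is empty ($0\le i<n_\alpha$, forward transitions), and exchanges $x+x^\alpha_i$ and $x+x^\alpha_i+e_\alpha$ at rate $1$ whenever $x+\mathcal A^\alpha_i$ is empty ($1\le i\le n_\alpha$, backward transitions). Equivalently, the rate of exchanging $x$ and $x+e_\alpha$ is $c^{\mathrm{aux}}_{x,x+e_\alpha}(\eta)=\#\{i\in\{0,\dots,n_\alpha-1\}:(x-x^\alpha_{i+1}+\mathcal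 A^\alpha_i)\setminus\{x\}\text{ is empty in }\eta\}$ whenever $\eta(x)\ne\eta(x+e_\alpha)$. *)

theory Defs
  imports "HOL-Analysis.Analysis"
begin

text \<open>Sites of Z^d are vectors int^'d (the finite type 'd indexes the d directions;
  e_alpha = axis alpha 1). A site is reduced to the torus Z^d/LZ^d by taking
  every coordinate mod L.\<close>

definition tor :: "int \<Rightarrow> int^'d \<Rightarrow> int^'d" where
  "tor L x = (\<chi> k. x $ k mod L)"

definition torus :: "int \<Rightarrow> (int^'d) set" where
  "torus L = {x. \<forall>k. 0 \<le> x $ k \<and> x $ k < L}"

text \<open>A^alpha is given by the list xs = [x_1,...,x_n] (0-indexed in Isabelle:
  x_{j+1} = xs!j). Aset xs alpha i is the set A^alpha_i, 0 <= i <= n.\<close>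
definition Aset :: "(int^'d) list \<Rightarrow> 'd \<Rightarrow> nat \<Rightarrow> (int^'d) set" where
  "Aset xs \<alpha> i = {xs ! j + axis \<alpha> 1 | j. j < i} \<union> {xs ! j | j. i \<le> j \<and> j < length xs}"

text \<open>A set of sites (of Z^d, read modulo L) is empty in the configuration eta
  (eta y = True means site y of the torus is occupied).\<close>
definition empty_in :: "int \<Rightarrow> (int^'d \<Rightarrow> bool) \<Rightarrow> (int^'d) set \<Rightarrow> bool" where
  "empty_in L \<eta> S = (\<forall>y\<in>S. \<not> \<eta> (tor L y))"

text \<open>c^aux_{x,x+e_alpha}(eta) = #{i in {0..n-1}: (x - x_{i+1} + A_i) minus {x} is empty},
  the removal of x being taken on the torus.\<close>
definition c_aux :: "int \<Rightarrow> (int^'d) list \<Rightarrow> 'd \<Rightarrow> (int^'d \<Rightarrow> bool) \<Rightarrow> int^'d \<Rightarrow> nat" where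
  "c_aux L xs \<alpha> \<eta> x = card {i. i < length xs \<and>
     empty_in L \<eta> ((\<lambda>y. x - xs ! i + y) ` Aset xs \<alpha> i - {y. tor L y = tor L x})}"

end

theory Submission
  imports Defs
begin

text \<open>Write \<open>F\<^sub>k(z)\<close> for the indicator that \<open>z + A\<^sub>k\<close> is empty. Because
  \<open>x - x\<^sub>i\<^sub>+\<^sub>1 + A\<^sub>i\<close> contains \<open>x\<close> and \<open>x - x\<^sub>i\<^sub>+\<^sub>1 + A\<^sub>i\<^sub>+\<^sub>1\<close> is obtained from it by
  replacing \<open>x\<close> with \<open>x + e\<^sub>\<alpha>\<close>, the contribution of the \<open>i\<close>-th forward transition to
  the current across the bond \<open>(x, x + e\<^sub>\<alpha>)\<close> is exactly
  \<open>F\<^sub>i\<^sub>+\<^sub>1(x - x\<^sub>i\<^sub>+\<^sub>1) - F\<^sub>i(x - x\<^sub>i\<^sub>+\<^sub>1)\<close>. Summing over the torus removes the translations,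
  so the total current telescopes to \<open>\<Sum> F\<^sub>n - \<Sum> F\<^sub>0\<close>, which vanishes since
  \<open>A\<^sub>n = e\<^sub>\<alpha> + A\<^sub>0\<close>.\<close>

lemma tor_add_tor: "tor L (tor L a + b) = tor L (a + b)"
  unfolding tor_def vec_eq_iff by (simp add: mod_add_left_eq)

lemma tor_add_left_cancel:
  assumes "tor L (z + a) = tor L (z + b)"
  shows "tor L a = tor L b"
proof -
  have "tor L (- z + (z + a)) = tor L (- z + (z + b))"
    using assms tor_add_tor[of L "z + a" "- z"] tor_add_tor[of L "z + b" "- z"]
    by (simp add: add.commute)
  then show ?thesis by simp
qed

lemma tor_in_torus: "L > 0 \<Longrightarrow> tor L a \<in> torus L"
  unfolding tor_def torus_def by simp

lemma tor_torus: "x \<in> torus L \<Longrightarrow> tor L x = x"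
  unfolding tor_def torus_def vec_eq_iff by simp

lemma sum_torus_translate:
  fixes g :: "int^'d::finite \<Rightarrow> 'a::comm_monoid_add"
  assumes "L > 0" and periodic: "\<And>y. g (tor L y) = g y"
  shows "(\<Sum>x\<in>torus L. g (x + v)) = (\<Sum>x\<in>torus L. g x)"
proof -
  have "(\<Sum>x\<in>torus L. g (x + v)) = (\<Sum>x\<in>torus L. g (tor L (x + v)))"
    by (simp add: periodic)
  also have "\<dots> = (\<Sum>x\<in>torus L. g x)"
  proof (rule sum.reindex_bij_witness[where i = "\<lambda>y. tor L (y - v)" and j = "\<lambda>x. tor L (x + v)"])
    fix a :: "int^'d" assume "a \<in> torus L"
    then show "tor L (tor L (a + v) - v) = a"
      using tor_add_tor[of L "a + v" "- v"] tor_torus by simp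
    show "tor L (a + v) \<in> torus L" using \<open>L > 0\<close> by (rule tor_in_torus)
  next
    fix b :: "int^'d" assume "b \<in> torus L"
    then show "tor L (tor L (b - v) + v) = b"
      using tor_add_tor[of L "b - v" v] tor_torus by simp
    show "tor L (b - v) \<in> torus L" using \<open>L > 0\<close> by (rule tor_in_torus)
  qed simp
  finally show ?thesis .
qed

definition empty_ind :: "int \<Rightarrow> (int^'d \<Rightarrow> bool) \<Rightarrow> (int^'d) set \<Rightarrow> int^'d \<Rightarrow> int" where
  "empty_ind L \<eta> S z = of_bool (empty_in L \<eta> ((+) z ` S))"

lemma empty_ind_tor: "empty_ind L \<eta> S (tor L z) = empty_ind L \<eta> S z"
  unfolding empty_ind_def empty_in_def by (simp add: tor_add_tor)

lemma sum_torus_empty_ind_translate: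
  "L > 0 \<Longrightarrow> (\<Sum>x\<in>torus L. empty_ind L \<eta> S (x + v)) = (\<Sum>x\<in>torus L. empty_ind L \<eta> S x)"
  by (rule sum_torus_translate) (simp_all add: empty_ind_tor)

lemma Aset_0: "Aset xs \<alpha> 0 = set xs"
  unfolding Aset_def by (auto simp: in_set_conv_nth)

lemma Aset_length: "Aset xs \<alpha> (length xs) = (\<lambda>y. y + axis \<alpha> 1) ` set xs"
  unfolding Aset_def by (auto simp: in_set_conv_nth image_iff)

lemma Aset_subset:
  "i \<le> length xs \<Longrightarrow> Aset xs \<alpha> i \<subseteq> set xs \<union> (\<lambda>y. y + axis \<alpha> 1) ` set xs"
  unfolding Aset_def by auto

lemma nth_mem_Aset: "i < length xs \<Longrightarrow> xs ! i \<in> Aset xs \<alpha> i"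
  unfolding Aset_def by auto

text \<open>Sortedness in direction \<open>\<alpha>\<close> is what keeps \<open>x\<^sub>i\<^sub>+\<^sub>1\<close> out of \<open>{x\<^sub>j + e\<^sub>\<alpha> | j \<le> i}\<close>.\<close>

lemma Aset_Suc:
  assumes "distinct xs" and sorted: "sorted_wrt (\<lambda>a b. b $ \<alpha> \<le> a $ \<alpha>) xs"
    and "i < length xs"
  shows "Aset xs \<alpha> (Suc i) = insert (xs ! i + axis \<alpha> 1) (Aset xs \<alpha> i - {xs ! i})"
proof -
  have "xs ! i \<noteq> xs ! j + axis \<alpha> 1" if "j < i" for j
  proof
    assume "xs ! i = xs ! j + axis \<alpha> 1"
    then have "(xs ! i) $ \<alpha> = (xs ! j) $ \<alpha> + 1"
      by (metis axis_nth vector_add_component)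
    moreover have "(xs ! i) $ \<alpha> \<le> (xs ! j) $ \<alpha>"
      using sorted_wrt_nth_less[OF sorted that \<open>i < length xs\<close>] by simp
    ultimately show False by simp
  qed
  then show ?thesis
    using \<open>i < length xs\<close> unfolding Aset_def
    by (auto simp: less_Suc_eq Suc_le_eq le_less nth_eq_iff_index_eq[OF \<open>distinct xs\<close>])
qed

lemma translate_Aset_remove:
  assumes inj: "inj_on (tor L) (set xs \<union> (\<lambda>y. y + axis \<alpha> 1) ` set xs)"
    and "i < length xs"
  shows "(+) (x - xs ! i) ` (Aset xs \<alpha> i - {xs ! i})
    = (+) (x - xs ! i) ` Aset xs \<alpha> i - {y. tor L y = tor L x}"
proof -
  have "tor L (x - xs ! i + w) \<noteq> tor L x" if "w \<in> Aset xs \<alpha> i" "w \<noteq> xs ! i" for w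
  proof
    assume "tor L (x - xs ! i + w) = tor L x"
    then have "tor L (x - xs ! i + w) = tor L (x - xs ! i + xs ! i)" by simp
    then have "tor L w = tor L (xs ! i)" by (rule tor_add_left_cancel)
    moreover have "xs ! i \<in> set xs" using \<open>i < length xs\<close> by simp
    ultimately show False
      using inj Aset_subset[of i xs \<alpha>] that \<open>i < length xs\<close>
      by (auto simp: inj_on_def)
  qed
  then show ?thesis by auto
qed

lemma forward_current_eq_diff:
  assumes "distinct xs" and "sorted_wrt (\<lambda>a b. b $ \<alpha> \<le> a $ \<alpha>) xs"
    and "inj_on (tor L) (set xs \<union> (\<lambda>y. y + axis \<alpha> 1) ` set xs)"
    and "i < length xs"
  shows "of_bool (empty_in L \<eta> ((\<lambda>y. x - xs ! i + y) ` Aset xs \<alpha> i - {y. tor L y = tor L x})) *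
      (of_bool (\<eta> (tor L x)) - of_bool (\<eta> (tor L (x + axis \<alpha> 1))))
    = empty_ind L \<eta> (Aset xs \<alpha> (Suc i)) (x - xs ! i) - empty_ind L \<eta> (Aset xs \<alpha> i) (x - xs ! i)"
proof -
  define B where "B = (+) (x - xs ! i) ` Aset xs \<alpha> i - {y. tor L y = tor L x}"
  have "x \<in> (+) (x - xs ! i) ` Aset xs \<alpha> i"
    using nth_mem_Aset[OF \<open>i < length xs\<close>] by (force simp: image_iff)
  then have "empty_in L \<eta> ((+) (x - xs ! i) ` Aset xs \<alpha> i) \<longleftrightarrow>
      empty_in L \<eta> B \<and> \<not> \<eta> (tor L x)"
    unfolding empty_in_def B_def by auto
  moreover have "(+) (x - xs ! i) ` Aset xs \<alpha> (Suc i) = insert (x + axis \<alpha> 1) B"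
    unfolding Aset_Suc[OF assms(1,2,4)] image_insert translate_Aset_remove[OF assms(3,4)]
    by (simp add: B_def)
  then have "empty_in L \<eta> ((+) (x - xs ! i) ` Aset xs \<alpha> (Suc i)) \<longleftrightarrow>
      empty_in L \<eta> B \<and> \<not> \<eta> (tor L (x + axis \<alpha> 1))"
    unfolding empty_in_def by auto
  ultimately show ?thesis
    unfolding empty_ind_def B_def[symmetric] by (simp add: of_bool_def)
qed

lemma c_aux_as_sum:
  "int (c_aux L xs \<alpha> \<eta> x) = (\<Sum>i<length xs. of_bool (empty_in L \<eta>
     ((\<lambda>y. x - xs ! i + y) ` Aset xs \<alpha> i - {y. tor L y = tor L x})))"
  unfolding c_aux_def by (simp add: Int_def)

lemma current_eq_telescoping_sum:
  assumes "distinct xs" and "sorted_wrt (\<lambda>a b. b $ \<alpha> \<le> a $ \<alpha>) xs"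
    and "inj_on (tor L) (set xs \<union> (\<lambda>y. y + axis \<alpha> 1) ` set xs)"
  shows "int (c_aux L xs \<alpha> \<eta> x) * (of_bool (\<eta> (tor L x)) - of_bool (\<eta> (tor L (x + axis \<alpha> 1))))
    = (\<Sum>i<length xs. empty_ind L \<eta> (Aset xs \<alpha> (Suc i)) (x - xs ! i)
                      - empty_ind L \<eta> (Aset xs \<alpha> i) (x - xs ! i))"
  unfolding c_aux_as_sum sum_distrib_right
  by (rule sum.cong) (simp_all add: forward_current_eq_diff[OF assms])

lemma sum_torus_translate_Aset_telescope:
  assumes "L > 0"
  shows "(\<Sum>x\<in>torus L. \<Sum>i<length xs. empty_ind L \<eta> (Aset xs \<alpha> (Suc i)) (x - xs ! i)
                                    - empty_ind L \<eta> (Aset xs \<alpha> i) (x - xs ! i)) = 0"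
proof -
  define F where "F k x = empty_ind L \<eta> (Aset xs \<alpha> k) x" for k x
  have translate: "(\<Sum>x\<in>torus L. F k (x + v)) = (\<Sum>x\<in>torus L. F k x)" for k v
    unfolding F_def using \<open>L > 0\<close> by (rule sum_torus_empty_ind_translate)
  have "(\<Sum>x\<in>torus L. \<Sum>i<length xs. F (Suc i) (x - xs ! i) - F i (x - xs ! i))
      = (\<Sum>i<length xs. (\<Sum>x\<in>torus L. F (Suc i) (x + - xs ! i)) - (\<Sum>x\<in>torus L. F i (x + - xs ! i)))"
    by (subst sum.swap) (simp add: sum_subtractf)
  also have "\<dots> = (\<Sum>i<length xs. (\<Sum>x\<in>torus L. F (Suc i) x) - (\<Sum>x\<in>torus L. F i x))"
    by (simp only: translate)
  also have "\<dots> = (\<Sum>x\<in>torus L. F (length xs) x) - (\<Sum>x\<in>torus L. F 0 x)"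
    by (rule sum_lessThan_telescope)
  also have "(\<Sum>x\<in>torus L. F (length xs) x) = (\<Sum>x\<in>torus L. F 0 (x + axis \<alpha> 1))"
    unfolding F_def empty_ind_def Aset_0 Aset_length image_image by (simp add: ac_simps)
  finally show ?thesis
    using translate[of 0 "axis \<alpha> 1"] unfolding F_def by simp
qed

theorem mainTheorem6:
  fixes A :: "'d::finite \<Rightarrow> (int^'d) list"
    and L :: int
    and \<eta> :: "int^'d \<Rightarrow> bool"
    and \<alpha> :: 'd
  assumes "L > 0"
    and "\<forall>\<beta>. distinct (A \<beta>)"
    and "\<forall>\<beta>. sorted_wrt (\<lambda>a b. b $ \<beta> \<le> a $ \<beta>) (A \<beta>)"
    and "\<forall>\<beta>. inj_on (tor L) (set (A \<beta>) \<union> (\<lambda>y. y + axis \<beta> 1) ` set (A \<beta>))"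
  shows "(\<Sum>x\<in>torus L. int (c_aux L (A \<alpha>) \<alpha> \<eta> x) *
            (of_bool (\<eta> (tor L x)) - of_bool (\<eta> (tor L (x + axis \<alpha> 1))))) = (0::int)"
  using current_eq_telescoping_sum[of "A \<alpha>" \<alpha> L \<eta>] assms
    sum_torus_translate_Aset_telescope[OF \<open>L > 0\<close>, of \<eta> "A \<alpha>" \<alpha>]
  by simp

end
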